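(* Let $-1\le a<1/4$ and $m\ge0$ an integer. For $\theta\in(2\pi/3,\pi)$ define \[ \zeta(\theta)=\frac{(2a-1)\cos\theta+\sqrt{(1-4a)\cos^2\theta+a}}{1-4a\cos^2\theta},\qquad g_m(\theta)=\frac{(\zeta(\theta)-\cos\theta)\sin((m+1)\theta)}{\sin\theta}-\cos((m+1)\theta)+\frac{1}{\zeta(\theta)^{m+1}}. \] Then the sign of $\lim_{\theta\to\pi^-}g_m(\theta)$ is $(-1)^m$. *)

theory Defs
  imports Complex_Main
begin

definition zeta :: "real \<Rightarrow> real \<Rightarrow> real" where
  "zeta a \<theta> = ((2*a - 1) * cos \<theta> + sqrt ((1 - 4*a) * (cos \<theta>)^2 + a)) / (1 - 4*a*(cos \<theta>)^2)"

definition g :: "real \<Rightarrow> nat \<Rightarrow> real \<Rightarrow> real" where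
  "g a m \<theta> = (zeta a \<theta> - cos \<theta>) * sin (real (m+1) * \<theta>) / sin \<theta>
              - cos (real (m+1) * \<theta>) + 1 / (zeta a \<theta>) ^ (m+1)"

end

theory Submission
  imports Defs
begin

text \<open>
  As \<open>\<theta> \<rightarrow> \<pi>\<close>, \<open>\<zeta>(\<theta>)\<close> tends to \<open>z = \<zeta>(\<pi>) = (1 - 2a + \<surd>(1 - 3a)) / (1 - 4a) \<ge> 1\<close>,
  and \<open>sin((m+1)\<theta>) / sin \<theta> \<rightarrow> (m+1)(-1)^m\<close>, so the limit of \<open>g\<^sub>m\<close> is
  \<open>(-1)^m ((z+1)(m+1) + 1) + z^-(m+1)\<close>. The first summand has absolute value at least 3,
  the second lies in \<open>(0,1]\<close>, so the sign is \<open>(-1)^m\<close>.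
\<close>

lemma tendsto_divide_at_common_zero:
  fixes f h :: "'a::real_normed_field \<Rightarrow> 'a"
  assumes "(f has_field_derivative f') (at c)" "(h has_field_derivative h') (at c)"
    and "f c = 0" "h c = 0" "h' \<noteq> 0"
  shows "((\<lambda>x. f x / h x) \<longlongrightarrow> f' / h') (at c)"
proof -
  have "((\<lambda>y. ((f y - f c) / (y - c)) / ((h y - h c) / (y - c))) \<longlongrightarrow> f' / h') (at c)"
    using assms(1,2,5) by (intro tendsto_divide) (simp_all add: has_field_derivative_iff)
  moreover have "\<forall>\<^sub>F y in at c. ((f y - f c) / (y - c)) / ((h y - h c) / (y - c)) = f y / h y"
    by (auto simp: eventually_at_filter assms(3,4))
  ultimately show ?thesis
    by (simp add: tendsto_cong)
qed

lemma sin_mult_divide_sin_tendsto_pi: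
  "((\<lambda>t. sin (real (m+1) * t) / sin t) \<longlongrightarrow> real (m+1) * (-1)^m) (at pi)"
proof -
  have "((\<lambda>t. sin (real (m+1) * t) / sin t)
          \<longlongrightarrow> real (m+1) * cos (real (m+1) * pi) / cos pi) (at pi)"
    by (rule tendsto_divide_at_common_zero)
      (auto intro!: derivative_eq_intros simp: sin_npi[of "Suc m", simplified])
  moreover have "real (m+1) * cos (real (m+1) * pi) / cos pi = real (m+1) * (-1)^m"
    using cos_npi[of "m+1"] by simp
  ultimately show ?thesis
    by simp
qed

lemma isCont_zeta: "4*a*(cos \<theta>)^2 \<noteq> 1 \<Longrightarrow> isCont (zeta a) \<theta>"
  unfolding zeta_def by (intro continuous_intros) auto

lemma zeta_pi: "zeta a pi = (1 - 2*a + sqrt (1 - 3*a)) / (1 - 4*a)"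
  unfolding zeta_def by (simp add: algebra_simps)

lemma one_le_zeta_pi:
  assumes "-1 \<le> a" "a < 1/4"
  shows "1 \<le> zeta a pi"
proof -
  have "-2*a \<le> sqrt (1 - 3*a)"
  proof (cases "0 \<le> a")
    case False
    \<comment> \<open>\<open>1 - 3a - 4a\<^sup>2 = (1 - 4a)(1 + a) \<ge> 0\<close>\<close>
    have "(-2*a)^2 \<le> 1 - 3*a"
      using mult_nonneg_nonneg[of "1 - 4*a" "1 + a"] assms
      by (simp add: power2_eq_square algebra_simps)
    then show ?thesis
      using False real_le_rsqrt by simp
  qed (use assms real_sqrt_ge_zero[of "1 - 3*a"] in linarith)
  then have "1 - 4*a \<le> 1 - 2*a + sqrt (1 - 3*a)"
    by linarith
  then show ?thesis
    using assms by (simp add: zeta_pi le_divide_eq)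
qed

lemma g_tendsto_pi:
  assumes "a < 1/4" "zeta a pi \<noteq> 0"
  shows "(g a m \<longlongrightarrow> (-1)^m * ((zeta a pi + 1) * real (m+1) + 1) + 1 / zeta a pi ^ (m+1))
           (at_left pi)"
proof -
  have zeta: "(zeta a \<longlongrightarrow> zeta a pi) (at_left pi)"
    using isCont_zeta[of a pi] assms(1) by (simp add: isCont_def filterlim_at_split)
  have ratio: "((\<lambda>t. sin (real (m+1) * t) / sin t) \<longlongrightarrow> real (m+1) * (-1)^m) (at_left pi)"
    using sin_mult_divide_sin_tendsto_pi by (simp add: filterlim_at_split)
  have "(g a m \<longlongrightarrow> (zeta a pi - cos pi) * (real (m+1) * (-1)^m) - cos (real (m+1) * pi)
                      + 1 / zeta a pi ^ (m+1)) (at_left pi)"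
    unfolding g_def[abs_def] times_divide_eq_right[symmetric]
    using assms(2) by (intro tendsto_intros zeta ratio) auto
  moreover have "(zeta a pi - cos pi) * (real (m+1) * (-1)^m) - cos (real (m+1) * pi)
                   = (-1)^m * ((zeta a pi + 1) * real (m+1) + 1)"
    using cos_npi[of "m+1"] by (simp add: algebra_simps)
  ultimately show ?thesis
    by simp
qed

lemma sgn_neg_one_power_mult_add:
  fixes A e :: real
  assumes "\<bar>e\<bar> < A"
  shows "sgn ((-1)^m * A + e) = (-1)^m"
  using assms by (cases "even m") (auto simp: sgn_if)

lemma abs_inverse_power_less:
  fixes z :: real
  assumes "1 \<le> z"
  shows "\<bar>1 / z ^ (m+1)\<bar> < (z + 1) * real (m+1) + 1"
proof -
  have "2 \<le> (z + 1) * real (m+1)"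
    using mult_mono[of 2 "z + 1" 1 "real (m+1)"] assms by simp
  moreover have "\<bar>1 / z ^ (m+1)\<bar> \<le> 1"
    using one_le_power[OF assms, of "m+1"] by simp
  ultimately show ?thesis
    by linarith
qed

theorem lemma2p10:
  fixes a :: real and m :: nat
  assumes "-1 \<le> a" and "a < 1/4"
  shows "\<exists>L. (g a m \<longlongrightarrow> L) (at_left pi) \<and> sgn L = (-1) ^ m"
proof -
  define z where "z = zeta a pi"
  have "1 \<le> z"
    unfolding z_def using one_le_zeta_pi[OF assms] .
  then have "(g a m \<longlongrightarrow> (-1)^m * ((z + 1) * real (m+1) + 1) + 1 / z ^ (m+1)) (at_left pi)"
    using g_tendsto_pi[OF assms(2)] unfolding z_def by simp
  moreover have "sgn ((-1)^m * ((z + 1) * real (m+1) + 1) + 1 / z ^ (m+1)) = (-1)^m"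
    using sgn_neg_one_power_mult_add abs_inverse_power_less[OF \<open>1 \<le> z\<close>] by blast
  ultimately show ?thesis
    by blast
qed

end
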